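(* For $A \in \mathbb{Q}$ let $$g_A(x) = b_3\,(x(x-15))^3 + b_2\,(x(x-15))^2 + b_1\,x(x-15) + b_0,$$ where $$b_0 = 36\,(128941675300A^4+235814377620A^3+34730973441A^2-216866857320A-132565503600),$$ $$b_1 = 4(A-1)(254A+219)(354070194A^2+848446325A+620203644),$$ $$b_2 = (A-1)(254A+219)(35708622A^2+96399845A+73722213),$$ $$b_3 = 4(A-1)(254A+219)(72474A^2+210275A+164709).$$ Then there exist infinitely many $A \in \mathbb{Q}$ such that the curve $C_A : y^2 = g_A(x)$ contains $16$ rational points in arithmetic progression.
   Context: Rational points $P_j = (x_j, y_j) \in \mathbb{Q}^2$, $j=1,\dots,n$, on a curve $y^2 = g(x)$ are said to be in arithmetic progression if their $x$-coordinates form an arithmetic progression, i.e. $x_j = x_1 + (j-1)d$ for some nonzero $d \in \mathbb{Q}$; $n$ is the length of the progression. *)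

theory Defs
  imports Main "HOL.Rat"
begin

definition b0 :: "rat \<Rightarrow> rat" where
  "b0 A = 36 * (128941675300*A^4 + 235814377620*A^3 + 34730973441*A^2 - 216866857320*A - 132565503600)"

definition b1 :: "rat \<Rightarrow> rat" where
  "b1 A = 4 * (A - 1) * (254*A + 219) * (354070194*A^2 + 848446325*A + 620203644)"

definition b2 :: "rat \<Rightarrow> rat" where
  "b2 A = (A - 1) * (254*A + 219) * (35708622*A^2 + 96399845*A + 73722213)"

definition b3 :: "rat \<Rightarrow> rat" where
  "b3 A = 4 * (A - 1) * (254*A + 219) * (72474*A^2 + 210275*A + 164709)"

definition gA :: "rat \<Rightarrow> rat \<Rightarrow> rat" where
  "gA A x = b3 A * (x*(x-15))^3 + b2 A * (x*(x-15))^2 + b1 A * (x*(x-15)) + b0 A"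

definition has_AP_points :: "(rat \<Rightarrow> rat) \<Rightarrow> nat \<Rightarrow> bool" where
  "has_AP_points g n \<longleftrightarrow>
     (\<exists>x1 d. d \<noteq> 0 \<and> (\<forall>j\<in>{1..n}. \<exists>y::rat. y^2 = g (x1 + of_nat (j - 1) * d)))"

end

theory Submission
  imports Defs
begin

text \<open>Identically in A, g_A takes square values at x = 1, ..., 14, while g_A(0) = g_A(15) = b_0(A);
so x = 0, ..., 15 is a progression of rational points whenever b_0(A) is a square. The quartic
V^2 = b_0(A) is birational to the elliptic curve E : Y^2 = X^3 + 336241770453 X + 77757946772431014,
and the point P = (1606564977/13924, -564614979033105/1643032) of E has infinite order, because
the X-coordinate of 2^n P has 2-adic valuation exactly -2(n+1). The points 2^n P therefore give
infinitely many solutions (A, V), and since each A has at most two V, infinitely many A.\<close>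

lemma gA_square_values:
  fixes A :: rat shows
  "gA A 1 = (1086864*A^2 + 511020*A - 255510)^2"
  "gA A 2 = (354840*A^2 - 709680*A - 987534)^2"
  "gA A 3 = (103380*A^2 - 675030*A - 770724)^2"
  "gA A 4 = (317244*A^2 + 617070*A + 408060)^2"
  "gA A 5 = (354840*A^2 + 732024*A + 255510)^2"
  "gA A 6 = (263904*A^2 + 624420*A + 454050)^2"
  "gA A 7 = (94740*A^2 + 647730*A + 599904)^2"
  "gA A 8 = (94740*A^2 + 647730*A + 599904)^2"
  "gA A 9 = (263904*A^2 + 624420*A + 454050)^2"
  "gA A 10 = (354840*A^2 + 732024*A + 255510)^2"
  "gA A 11 = (317244*A^2 + 617070*A + 408060)^2"
  "gA A 12 = (103380*A^2 - 675030*A - 770724)^2"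
  "gA A 13 = (354840*A^2 - 709680*A - 987534)^2"
  "gA A 14 = (1086864*A^2 + 511020*A - 255510)^2"
  "gA A 0 = b0 A" "gA A 15 = b0 A"
  by (simp_all add: gA_def b0_def b1_def b2_def b3_def power2_eq_square power3_eq_cube; algebra)+

lemma has_AP_points_if_b0_square:
  assumes "b0 A = V^2"
  shows "has_AP_points (gA A) 16"
  unfolding has_AP_points_def
proof (rule exI[of _ 0], rule exI[of _ 1], intro conjI ballI)
  fix j :: nat assume "j \<in> {1..16}"
  then have "j - 1 \<in> {0,1,2,3,4,5,6,7,8,9,10,11,12,13,14,15}" by simp presburger
  then show "\<exists>y. y^2 = gA A (0 + of_nat (j - 1) * 1)"
    using assms by (auto simp: gA_square_values)
qed simp

text \<open>The birational map from E to the quartic V^2 = b_0(A), and param_X recovering X from (A, V).\<close>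

definition param_A :: "rat \<Rightarrow> rat \<Rightarrow> rat" where
  "param_A X Y = (Y - 4137*X - 10278162909) / (Y - 5083*X + 9890597769)"

definition param_V :: "rat \<Rightarrow> rat \<Rightarrow> rat" where
  "param_V X Y = 1342374 * (X^3 - 63960129*X^2 - 336241770453*X - 7324204897998951507 + 196958361600*Y)
     / (Y - 5083*X + 9890597769)^2"

definition param_X :: "rat \<Rightarrow> rat \<Rightarrow> rat" where
  "param_X A V = ((447458*(V/6 + 223729) + 1075804923622*(A - 1)) / (A - 1)^2 + 505274719367) / 223729"

lemma b0_homogenized:
  fixes M D :: rat
  assumes "D \<noteq> 0"
  shows "b0 (M/D) * D^4 = 36*(128941675300*M^4 + 235814377620*M^3*D + 34730973441*M^2*D^2
    - 216866857320*M*D^3 - 132565503600*D^4)"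
  using assms by (simp add: b0_def field_simps power2_eq_square power3_eq_cube power4_eq_xxxx)

lemma b0_param_identity:
  fixes X Y :: rat
  shows "128941675300*(Y - 4137*X - 10278162909)^4
   + 235814377620*(Y - 4137*X - 10278162909)^3*(Y - 5083*X + 9890597769)
   + 34730973441*(Y - 4137*X - 10278162909)^2*(Y - 5083*X + 9890597769)^2
   - 216866857320*(Y - 4137*X - 10278162909)*(Y - 5083*X + 9890597769)^3
   - 132565503600*(Y - 5083*X + 9890597769)^4
   - 50054665441 * (X^3 - 63960129*X^2 - 336241770453*X - 7324204897998951507 + 196958361600*Y)^2
   = (Y^2 - X^3 - 336241770453*X - 77757946772431014)
     * (50054665441*Y^2 - 19717369791391002931200*Y + 50054665441*X^3 - 6403005717316403778*X^2
        + 273041544914190460738659681*X - 1939570221572164200467504866278348)"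
  by algebra

lemma param_X_identity:
  fixes X Y :: rat
  shows "100109330882*((X^3 - 63960129*X^2 - 336241770453*X - 7324204897998951507 + 196958361600*Y)
      + (Y - 5083*X + 9890597769)^2)
    + 1075804923622*(946*X - 20168760678)*(Y - 5083*X + 9890597769)
    + 505274719367*(946*X - 20168760678)^2 - 223729*(946*X - 20168760678)^2*X
    = (Y^2 - X^3 - 336241770453*X - 77757946772431014) * 100109330882"
  by algebra

lemma b0_param_A:
  fixes X Y :: rat
  assumes curve: "Y^2 = X^3 + 336241770453*X + 77757946772431014"
    and denom: "Y - 5083*X + 9890597769 \<noteq> 0"
  shows "b0 (param_A X Y) = (param_V X Y)^2"
proof -
  define D where "D = Y - 5083*X + 9890597769"
  define M where "M = Y - 4137*X - 10278162909"
  define W where "W = X^3 - 63960129*X^2 - 336241770453*X - 7324204897998951507 + 196958361600*Y"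
  have D0: "D \<noteq> 0" using denom D_def by simp
  have "128941675300*M^4 + 235814377620*M^3*D + 34730973441*M^2*D^2 - 216866857320*M*D^3
      - 132565503600*D^4 = 50054665441 * W^2"
    using b0_param_identity[of Y X] curve unfolding D_def M_def W_def by simp
  then have "b0 (M/D) * D^4 = 36*50054665441 * W^2" using b0_homogenized[OF D0, of M] by simp
  then have "b0 (M/D) = 36*50054665441 * W^2 / D^4" using D0 by (simp add: field_simps)
  also have "\<dots> = (1342374*W/D^2)^2" by (simp add: power2_eq_square power4_eq_xxxx)
  finally show ?thesis unfolding param_A_def param_V_def D_def M_def W_def .
qed

lemma param_X_param:
  fixes X Y :: rat
  assumes curve: "Y^2 = X^3 + 336241770453*X + 77757946772431014"
    and denom: "Y - 5083*X + 9890597769 \<noteq> 0" and X_ne: "946*X \<noteq> 20168760678"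
  shows "param_X (param_A X Y) (param_V X Y) = X"
proof -
  define D where "D = Y - 5083*X + 9890597769"
  define N where "N = 946*X - 20168760678"
  define W where "W = X^3 - 63960129*X^2 - 336241770453*X - 7324204897998951507 + 196958361600*Y"
  have D0: "D \<noteq> 0" and N0: "N \<noteq> 0" using denom X_ne unfolding D_def N_def by simp_all
  have key: "100109330882*(W + D^2) + 1075804923622*N*D + 505274719367*N^2 - 223729*N^2*X = 0"
    using param_X_identity[of X Y] curve unfolding D_def N_def W_def by simp
  have "param_A X Y - 1 = N/D" using D0 unfolding param_A_def D_def N_def by (simp add: field_simps)
  moreover have "param_V X Y / 6 = 223729*W/D^2"
    unfolding param_V_def D_def[symmetric] W_def[symmetric] by simp
  ultimately have "param_X (param_A X Y) (param_V X Y)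
      = ((447458*(223729*W/D^2 + 223729) + 1075804923622*(N/D)) / (N/D)^2 + 505274719367) / 223729"
    unfolding param_X_def by simp
  also have "\<dots> = (100109330882*(W + D^2) + 1075804923622*N*D + 505274719367*N^2) / (223729*N^2)"
    using D0 N0 by (simp add: field_simps power2_eq_square)
  also have "\<dots> = X" using key N0 by (simp add: field_simps)
  finally show ?thesis .
qed

definition ec_double :: "'a::field \<Rightarrow> 'a \<times> 'a \<Rightarrow> 'a \<times> 'a" where
  "ec_double a P = (let (X, Y) = P; m = (3*X^2 + a) / (2*Y); X' = m^2 - 2*X in (X', m*(X - X') - Y))"

lemma ec_double_on_curve:
  fixes X Y a b :: "'a::field_char_0"
  assumes curve: "Y^2 = X^3 + a*X + b" and "Y \<noteq> 0" and "ec_double a (X, Y) = (X', Y')"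
  shows "Y'^2 = X'^3 + a*X' + b"
    and "X' = (X^4 - 2*a*X^2 - 8*b*X + a^2) / (4*(X^3 + a*X + b))"
proof -
  define m where "m = (3*X^2 + a) / (2*Y)"
  have X': "X' = m^2 - 2*X" and Y': "Y' = m*(X - X') - Y"
    using assms(3) unfolding ec_double_def m_def Let_def by auto
  have cubic_ne: "X^3 + a*X + b \<noteq> 0" using curve \<open>Y \<noteq> 0\<close> by auto
  show "X' = (X^4 - 2*a*X^2 - 8*b*X + a^2) / (4*(X^3 + a*X + b))"
    unfolding X' m_def using \<open>Y \<noteq> 0\<close> cubic_ne curve[symmetric]
    by (simp add: field_simps power2_eq_square power3_eq_cube power4_eq_xxxx) algebra
  show "Y'^2 = X'^3 + a*X' + b"
    unfolding Y' X' m_def using \<open>Y \<noteq> 0\<close> curve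
    by (simp add: field_simps power2_eq_square power3_eq_cube) algebra
qed

definition denom_exact_4_pow :: "rat \<Rightarrow> nat \<Rightarrow> bool" where
  "denom_exact_4_pow X k \<longleftrightarrow> (\<exists>u w::int. odd u \<and> odd w \<and> X = of_int u / of_int (4^k * w))"

lemma denom_exact_4_powE:
  assumes "denom_exact_4_pow X k" and "k \<ge> 1"
  obtains u M :: int where "odd u" "even M" "M \<noteq> 0" "X = of_int u / of_int M"
proof -
  obtain u w :: int where "odd u" "odd w" "X = of_int u / of_int (4^k * w)"
    using assms(1) unfolding denom_exact_4_pow_def by blast
  moreover have "even ((4::int)^k * w)" and "(4::int)^k * w \<noteq> 0"
    using assms(2) \<open>odd w\<close> by (auto simp: even_power)
  ultimately show thesis using that by blast
qed

lemma denom_exact_4_pow_unique: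
  assumes "denom_exact_4_pow X k" and "denom_exact_4_pow X k'"
  shows "k = k'"
proof -
  have False if d: "denom_exact_4_pow X k" and d': "denom_exact_4_pow X k'" and "k < k'" for k k'
  proof -
    obtain u w :: int where "odd u" "odd w" and X: "X = of_int u / of_int (4^k * w)"
      using d unfolding denom_exact_4_pow_def by blast
    obtain u' w' :: int where "odd u'" "odd w'" and X': "X = of_int u' / of_int (4^k' * w')"
      using d' unfolding denom_exact_4_pow_def by blast
    have "w \<noteq> 0" "w' \<noteq> 0" using \<open>odd w\<close> \<open>odd w'\<close> by auto
    with X X' have "(of_int (u * (4^k' * w')) :: rat) = of_int (u' * (4^k * w))"
      by (simp add: field_simps)
    then have "u * (4^k' * w') = u' * (4^k * w)" by (simp only: of_int_eq_iff)
    moreover have "(4::int)^k' = 4^k * 4^(k' - k)" using \<open>k < k'\<close> by (simp flip: power_add)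
    ultimately have "u * 4^(k' - k) * w' = u' * w" by (simp add: algebra_simps)
    moreover have "even (u * 4^(k' - k) * w')" using \<open>k < k'\<close> by (simp add: even_power)
    ultimately show False using \<open>odd u'\<close> \<open>odd w\<close> by simp
  qed
  then show ?thesis using assms by (metis linorder_neqE_nat)
qed

lemma denom_exact_4_pow_odd_multiple_ne_int:
  fixes p r :: int
  assumes "denom_exact_4_pow X k" and "k \<ge> 1" and "odd p"
  shows "of_int p * X \<noteq> of_int r"
proof
  assume h: "of_int p * X = of_int r"
  obtain u M :: int where "odd u" "even M" "M \<noteq> 0" and X: "X = of_int u / of_int M"
    using denom_exact_4_powE[OF assms(1,2)] .
  have "(of_int (p*u) :: rat) = of_int (r*M)" using h \<open>M \<noteq> 0\<close> unfolding X by (simp add: field_simps)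
  then have "p*u = r*M" by (simp only: of_int_eq_iff)
  then show False using \<open>odd u\<close> \<open>odd p\<close> \<open>even M\<close> by (metis even_mult_iff)
qed

lemma denom_exact_4_pow_cubic_ne_square_linear:
  fixes a b p r :: int
  assumes "denom_exact_4_pow X k" and "k \<ge> 1"
  shows "(of_int p * X + of_int r)^2 \<noteq> X^3 + of_int a*X + of_int b"
proof
  assume h: "(of_int p * X + of_int r)^2 = X^3 + of_int a*X + of_int b"
  obtain u M :: int where "odd u" "even M" and M0: "M \<noteq> 0" and X: "X = of_int u / of_int M"
    using denom_exact_4_powE[OF assms] .
  have "(of_int p * X + of_int r)^2 = (of_int ((p*u + r*M)^2) / of_int M^2 :: rat)"
    unfolding X using M0 by (simp add: field_simps power2_eq_square)
  moreover have "X^3 + of_int a*X + of_int b = (of_int (u^3 + a*u*M^2 + b*M^3) / of_int M^3 :: rat)"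
    unfolding X using M0 by (simp add: field_simps power2_eq_square power3_eq_cube)
  ultimately have "(of_int ((p*u + r*M)^2 * M^3) :: rat) = of_int ((u^3 + a*u*M^2 + b*M^3) * M^2)"
    using h M0 by (simp add: frac_eq_eq)
  then have "M^2 * (M*(p*u + r*M)^2) = M^2 * (u^3 + a*u*M^2 + b*M^3)"
    by (simp only: of_int_eq_iff) (simp add: algebra_simps power3_eq_cube power2_eq_square)
  then have "M*(p*u + r*M)^2 = u^3 + a*u*M^2 + b*M^3" using M0 by simp
  moreover have "odd (u^3 + a*u*M^2 + b*M^3)" using \<open>odd u\<close> \<open>even M\<close> by auto
  ultimately show False using \<open>even M\<close> by (metis even_mult_iff)
qed

lemma denom_exact_4_pow_double:
  fixes a b :: int
  assumes "denom_exact_4_pow X k" and "k \<ge> 1"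
  shows "X^3 + of_int a*X + of_int b \<noteq> 0"
    and "denom_exact_4_pow ((X^4 - 2*of_int a*X^2 - 8*of_int b*X + of_int a^2)
           / (4*(X^3 + of_int a*X + of_int b))) (Suc k)"
proof -
  obtain u w :: int where "odd u" "odd w" and X: "X = of_int u / of_int (4^k * w)"
    using assms(1) unfolding denom_exact_4_pow_def by blast
  define M where "M = 4^k * w"
  have "even M" "M \<noteq> 0" unfolding M_def using assms(2) \<open>odd w\<close> by (auto simp: even_power)
  define D where "D = u^3 + a*u*M^2 + b*M^3"
  define N where "N = u^4 - 2*a*u^2*M^2 - 8*b*u*M^3 + a^2*M^4"
  have "odd D" "odd N" unfolding D_def N_def using \<open>odd u\<close> \<open>even M\<close> by auto
  then have D0: "(of_int D :: rat) \<noteq> 0" by (metis even_zero of_int_eq_0_iff)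
  have cubic: "X^3 + of_int a*X + of_int b = of_int D / of_int M^3"
    unfolding X M_def[symmetric] D_def using \<open>M \<noteq> 0\<close>
    by (simp add: field_simps power2_eq_square power3_eq_cube)
  then show "X^3 + of_int a*X + of_int b \<noteq> 0" using D0 \<open>M \<noteq> 0\<close> by simp
  have quartic: "X^4 - 2*of_int a*X^2 - 8*of_int b*X + of_int a^2 = of_int N / of_int M^4"
    unfolding X M_def[symmetric] N_def using \<open>M \<noteq> 0\<close>
    by (simp add: field_simps power2_eq_square power3_eq_cube power4_eq_xxxx)
  have "(X^4 - 2*of_int a*X^2 - 8*of_int b*X + of_int a^2) / (4*(X^3 + of_int a*X + of_int b))
      = of_int N / of_int (4^Suc k * (w*D))"
    unfolding quartic cubic using \<open>M \<noteq> 0\<close> D0 unfolding M_def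
    by (simp add: field_simps power2_eq_square power3_eq_cube power4_eq_xxxx)
  then show "denom_exact_4_pow ((X^4 - 2*of_int a*X^2 - 8*of_int b*X + of_int a^2)
      / (4*(X^3 + of_int a*X + of_int b))) (Suc k)"
    unfolding denom_exact_4_pow_def using \<open>odd N\<close> \<open>odd w\<close> \<open>odd D\<close>
    by (intro exI[of _ N] exI[of _ "w*D"]) auto
qed

lemma ec_double_iterate_denom:
  fixes a b :: int
  assumes curve: "Y^2 = X^3 + of_int a*X + of_int b"
    and "denom_exact_4_pow X k" and "k \<ge> 1"
    and "(ec_double (of_int a) ^^ n) (X, Y) = (X', Y')"
  shows "Y'^2 = X'^3 + of_int a*X' + of_int b \<and> denom_exact_4_pow X' (k + n)"
  using assms(4)
proof (induction n arbitrary: X' Y')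
  case 0
  then show ?case using assms(1,2) by simp
next
  case (Suc n)
  obtain X0 Y0 where prev: "(ec_double (of_int a) ^^ n) (X, Y) = (X0, Y0)" by fastforce
  have curve0: "Y0^2 = X0^3 + of_int a*X0 + of_int b" and denom0: "denom_exact_4_pow X0 (k + n)"
    using Suc.IH[OF prev] by auto
  have "k + n \<ge> 1" using \<open>k \<ge> 1\<close> by simp
  have "Y0 \<noteq> 0" using curve0 denom_exact_4_pow_double(1)[OF denom0 \<open>k + n \<ge> 1\<close>, of a b] by auto
  have step: "ec_double (of_int a) (X0, Y0) = (X', Y')" using Suc.prems prev by simp
  show ?case
    using ec_double_on_curve[OF curve0 \<open>Y0 \<noteq> 0\<close> step]
      denom_exact_4_pow_double(2)[OF denom0 \<open>k + n \<ge> 1\<close>, of a b] by simp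
qed

definition ec_point :: "nat \<Rightarrow> rat \<times> rat" where
  "ec_point n = (ec_double 336241770453 ^^ n) (1606564977/13924, -564614979033105/1643032)"

lemma ec_point_on_curve_denom:
  assumes "ec_point n = (X, Y)"
  shows "Y^2 = X^3 + 336241770453*X + 77757946772431014" and "denom_exact_4_pow X (Suc n)"
proof -
  have base_curve: "(-564614979033105/1643032 :: rat)^2
      = (1606564977/13924)^3 + 336241770453*(1606564977/13924) + 77757946772431014"
    by (simp add: power2_eq_square power3_eq_cube)
  have base_denom: "denom_exact_4_pow (1606564977/13924) 1"
    unfolding denom_exact_4_pow_def by (intro exI[of _ 1606564977] exI[of _ 3481]) simp
  have "(ec_double (of_int 336241770453) ^^ n) (1606564977/13924, -564614979033105/1643032) = (X, Y)"
    using assms unfolding ec_point_def by simp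
  from ec_double_iterate_denom[OF _ base_denom _ this] base_curve
  show "Y^2 = X^3 + 336241770453*X + 77757946772431014" and "denom_exact_4_pow X (Suc n)"
    by simp_all
qed

lemma ec_point_param:
  assumes "ec_point n = (X, Y)"
  shows "b0 (param_A X Y) = (param_V X Y)^2" and "param_X (param_A X Y) (param_V X Y) = X"
proof -
  note curve = ec_point_on_curve_denom(1)[OF assms]
  note denom = ec_point_on_curve_denom(2)[OF assms]
  have "Suc n \<ge> 1" by simp
  have "Y - 5083*X + 9890597769 \<noteq> 0"
  proof
    assume "Y - 5083*X + 9890597769 = 0"
    then have "Y = of_int 5083 * X + of_int (-9890597769)" by simp
    then have "(of_int 5083 * X + of_int (-9890597769))^2
        = X^3 + of_int 336241770453*X + of_int 77757946772431014"
      using curve by simp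
    then show False using denom_exact_4_pow_cubic_ne_square_linear[OF denom \<open>Suc n \<ge> 1\<close>] by blast
  qed
  moreover have "946*X \<noteq> 20168760678"
    using denom_exact_4_pow_odd_multiple_ne_int[OF denom \<open>Suc n \<ge> 1\<close>, of 473 10084380339] by simp
  ultimately show "b0 (param_A X Y) = (param_V X Y)^2" and "param_X (param_A X Y) (param_V X Y) = X"
    using b0_param_A param_X_param curve by simp_all
qed

lemma infinite_b0_square_pairs: "infinite {(A, V). b0 A = V^2}"
proof
  assume fin: "finite {(A, V). b0 A = V^2}"
  define f where "f n = (case ec_point n of (X, Y) \<Rightarrow> (param_A X Y, param_V X Y))" for n
  have f_props: "f n \<in> {(A, V). b0 A = V^2} \<and> (case f n of (A, V) \<Rightarrow> param_X A V) = fst (ec_point n)"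
    for n
  proof (cases "ec_point n")
    case (Pair X Y)
    then show ?thesis using ec_point_param[OF Pair] by (simp add: f_def)
  qed
  then have "range f \<subseteq> {(A, V). b0 A = V^2}" by (simp add: image_subset_iff)
  moreover have "inj f"
  proof (rule injI)
    fix m n assume "f m = f n"
    then have "fst (ec_point m) = fst (ec_point n)" using f_props by metis
    then show "m = n"
      using ec_point_on_curve_denom(2) denom_exact_4_pow_unique by (metis Suc_inject prod.collapse)
  qed
  ultimately show False
    using fin finite_subset finite_imageD infinite_UNIV_nat by metis
qed

lemma finite_square_roots: "finite {x :: 'a :: idom. x^2 = c}"
proof (cases "\<exists>s :: 'a. s^2 = c")
  case True
  then obtain s where "s^2 = c" by blast
  then have "{x. x^2 = c} \<subseteq> {s, -s}" by (auto simp: power2_eq_iff)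
  then show ?thesis by (rule finite_subset) simp
qed simp

theorem theorem3:
  shows "infinite {A::rat. has_AP_points (gA A) 16}"
proof
  assume "finite {A::rat. has_AP_points (gA A) 16}"
  then have "finite (SIGMA A:{A. has_AP_points (gA A) 16}. {V. V^2 = b0 A})"
    using finite_square_roots by blast
  moreover have "{(A, V). b0 A = V^2} \<subseteq> (SIGMA A:{A. has_AP_points (gA A) 16}. {V. V^2 = b0 A})"
    using has_AP_points_if_b0_square by auto
  ultimately show False using infinite_b0_square_pairs finite_subset by blast
qed

end
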